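(* Let $\phi$ be an instance of MonLinNAE3SAT, and let $\mathcal{G}$ be the lifetime-1 temporal graph constructed from $\phi$, with sources $s$ and $s'$. If $\phi$ is satisfiable in the not-all-equal sense, then the minimum value of a solution of \textsc{ReachFast} on $\mathcal{G}$ with sources $\{s,s'\}$ equals $6$.
   Context: MonLinNAE3SAT instance: a CNF formula $\phi$ on variables $x_1,\dots,x_n$ with clauses $c_1,\dots,c_m$. Every clause has exactly three distinct literals, every variable appears exactly four times, there are no negations, and any two clauses share at most one variable. The formula is NAE-satisfiable if some truth assignment makes, in every clause, at least one literal true and at least one literal false. Construction of $\mathcal{G}$. All edges have the single label $1$ (lifetime $1$). The vertices and edges are as follows. - Sources $s,s'$. - For each clause $c_j$: vertices $a_j,a'_j,z_j,z'_j$ and edges $sa_j$, $s'a'_j$, $a_jz_j$, $a'_jz'_j$. - For each variable $x_i$: vertices $b_i,b'_i,w_i$ and edges $b_iw_i$, $w_ib'_i$. - If $x_i$ appears in $c_j$: edges $a_jb_i$ and $a'_jb'_i$. - If $x_i$ and $x_k$ appear in a common clause: edges $b_ib_k$, $b'_ib'_k$, $w_iw_k$. - A ladder on vertices $p_1,\dots,p_5,q_1,\dots,q_5$ with edges $sp_1$, $sq_1$, $s'p_5$, $s'q_5$, $p_ip_{i+1}$ and $q_iq_{i+1}$ for $i\in[4]$, and $p_iq_i$ for $i\in[5]$. Temporal graph notions. A temporal graph has edge sets $E_1,\dots,E_{t_{\max}}$, and an edge has label $i$ if it lies in $E_i$. A temporal path uses edges with strictly increasing labels; its arrival time is its last label.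 $\mathrm{reachtime}(v,\cdot)$ is the least $t$ such that $v$ reaches every vertex by time $t$. Delaying a label $i$ by a positive integer $\delta$ replaces it by $i+\delta$. A solution for sources $S$ is a temporal graph obtained by delaying labels in which every source reaches every vertex; its value is $\max_{v\in S}\mathrm{reachtime}(v,\cdot)$. *)

theory Defs
  imports Complex_Main
begin

text \<open>Variables are x_0,...,x_{n-1}, clauses c_0,...,c_{m-1}; a clause is the set of
  (indices of) its three distinct variables (no negations: monotone).\<close>

definition MonLinNAE3SAT :: "nat \<Rightarrow> nat \<Rightarrow> (nat \<Rightarrow> nat set) \<Rightarrow> bool" where
  "MonLinNAE3SAT n m c \<longleftrightarrow>
     (\<forall>j<m. c j \<subseteq> {..<n} \<and> card (c j) = 3) \<and>
     (\<forall>i<n. card {j. j < m \<and> i \<in> c j} = 4) \<and>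
     (\<forall>j<m. \<forall>k<m. j \<noteq> k \<longrightarrow> card (c j \<inter> c k) \<le> 1)"

definition NAE_satisfiable :: "nat \<Rightarrow> (nat \<Rightarrow> nat set) \<Rightarrow> bool" where
  "NAE_satisfiable m c \<longleftrightarrow>
     (\<exists>\<tau> :: nat \<Rightarrow> bool. \<forall>j<m. (\<exists>i\<in>c j. \<tau> i) \<and> (\<exists>i\<in>c j. \<not> \<tau> i))"

definition temporal_path_arrival ::
  "'v set set \<Rightarrow> ('v set \<Rightarrow> nat) \<Rightarrow> 'v \<Rightarrow> 'v \<Rightarrow> nat \<Rightarrow> bool" where
  "temporal_path_arrival E lab u v t \<longleftrightarrow>
     (\<exists>vs. length vs \<ge> 2 \<and> hd vs = u \<and> last vs = v \<and>
        (\<forall>k. k + 1 < length vs \<longrightarrow> {vs!k, vs!(k+1)} \<in> E) \<and>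
        (\<forall>k. k + 2 < length vs \<longrightarrow> lab {vs!k, vs!(k+1)} < lab {vs!(k+1), vs!(k+2)}) \<and>
        lab {vs!(length vs - 2), vs!(length vs - 1)} = t)"

definition reaches_by :: "'v set set \<Rightarrow> ('v set \<Rightarrow> nat) \<Rightarrow> 'v \<Rightarrow> 'v \<Rightarrow> nat \<Rightarrow> bool" where
  "reaches_by E lab u v t \<longleftrightarrow> u = v \<or> (\<exists>t'\<le>t. temporal_path_arrival E lab u v t')"

definition reachtime :: "'v set \<Rightarrow> 'v set set \<Rightarrow> ('v set \<Rightarrow> nat) \<Rightarrow> 'v \<Rightarrow> nat" where
  "reachtime V E lab u = (LEAST t. \<forall>v\<in>V. reaches_by E lab u v t)"

definition delayed :: "'v set set \<Rightarrow> ('v set \<Rightarrow> nat) \<Rightarrow> ('v set \<Rightarrow> nat) \<Rightarrow> bool" where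
  "delayed E lab0 lab \<longleftrightarrow> (\<forall>e\<in>E. lab0 e \<le> lab e)"

definition is_solution ::
  "'v set \<Rightarrow> 'v set set \<Rightarrow> ('v set \<Rightarrow> nat) \<Rightarrow> 'v set \<Rightarrow> ('v set \<Rightarrow> nat) \<Rightarrow> bool" where
  "is_solution V E lab0 S lab \<longleftrightarrow> delayed E lab0 lab \<and>
     (\<forall>s\<in>S. \<forall>v\<in>V. \<exists>t. reaches_by E lab s v t)"

definition solution_value :: "'v set \<Rightarrow> 'v set set \<Rightarrow> ('v set \<Rightarrow> nat) \<Rightarrow> 'v set \<Rightarrow> nat" where
  "solution_value V E lab S = Max ((\<lambda>s. reachtime V E lab s) ` S)"

datatype vtx = Src | Src' | A nat | A' nat | Z nat | Z' nat
  | B nat | B' nat | W nat | P nat | Q nat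

definition G_vertices :: "nat \<Rightarrow> nat \<Rightarrow> vtx set" where
  "G_vertices n m = {Src, Src'} \<union> (\<Union>j\<in>{..<m}. {A j, A' j, Z j, Z' j})
     \<union> (\<Union>i\<in>{..<n}. {B i, B' i, W i}) \<union> (\<Union>i\<in>{1..5}. {P i, Q i})"

definition G_edges :: "nat \<Rightarrow> nat \<Rightarrow> (nat \<Rightarrow> nat set) \<Rightarrow> vtx set set" where
  "G_edges n m c =
     (\<Union>j\<in>{..<m}. {{Src, A j}, {Src', A' j}, {A j, Z j}, {A' j, Z' j}})
   \<union> (\<Union>i\<in>{..<n}. {{B i, W i}, {W i, B' i}})
   \<union> {{A j, B i} | i j. j < m \<and> i < n \<and> i \<in> c j}
   \<union> {{A' j, B' i} | i j. j < m \<and> i < n \<and> i \<in> c j}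
   \<union> (\<Union>{ {{B i, B k}, {B' i, B' k}, {W i, W k}} | i k.
          i < n \<and> k < n \<and> i \<noteq> k \<and> (\<exists>j<m. i \<in> c j \<and> k \<in> c j)})
   \<union> {{Src, P 1}, {Src, Q 1}, {Src', P 5}, {Src', Q 5}}
   \<union> (\<Union>i\<in>{1..4}. {{P i, P (i+1)}, {Q i, Q (i+1)}})
   \<union> (\<Union>i\<in>{1..5}. {{P i, Q i}})"

definition G_labels :: "vtx set \<Rightarrow> nat" where
  "G_labels e = 1"

end

theory Submission
  imports Defs
begin

text \<open>
  Lower bound: along a temporal path the labels are at least 1 and strictly increase, so the
  arrival time is at least the number of edges; since \<open>s'\<close> is at graph distance 6 from
  \<open>s\<close>, no delaying lets \<open>s\<close> reach \<open>s'\<close> before time 6.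

  Upper bound: fix an NAE assignment \<open>\<tau>\<close>. From \<open>s\<close>, the gadget \<open>B, W, B'\<close> of a true
  variable is traversed at times 2, 3, 4. A false variable shares a clause with a true one, so
  its \<open>W\<close> and \<open>B'\<close> are entered at times 4 and 5 through the \<open>W\<close>--\<open>W\<close> and
  \<open>B'\<close>--\<open>B'\<close> edges, and its \<open>B\<close> directly from \<open>A\<close> at time 5; the ladder and the
  pendant vertices \<open>Z, Z'\<close> are timed to be reached by time 6. The automorphism of the graph
  exchanging \<open>s\<close> and \<open>s'\<close> carries this labelling to the one of the negated assignment,
  which is again NAE, so \<open>s'\<close> also reaches everything by time 6.
\<close>

section \<open>Temporal paths\<close>

lemma temporal_path_arrival_edge:
  assumes "{u, v} \<in> E" and "lab {u, v} = t"
  shows "temporal_path_arrival E lab u v t"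
  unfolding temporal_path_arrival_def
  by (rule exI[of _ "[u, v]"]) (use assms in \<open>auto simp: less_Suc_eq\<close>)

lemma temporal_path_arrival_snoc:
  assumes path: "temporal_path_arrival E lab u v t"
    and edge: "{v, w} \<in> E" and label: "lab {v, w} = t'" and later: "t < t'"
  shows "temporal_path_arrival E lab u w t'"
proof -
  obtain vs where len: "length vs \<ge> 2" and hd: "hd vs = u" and last: "last vs = v"
    and edges: "\<forall>k. k + 1 < length vs \<longrightarrow> {vs!k, vs!(k+1)} \<in> E"
    and incr: "\<forall>k. k + 2 < length vs \<longrightarrow> lab {vs!k, vs!(k+1)} < lab {vs!(k+1), vs!(k+2)}"
    and arr: "lab {vs!(length vs - 2), vs!(length vs - 1)} = t"
    using path unfolding temporal_path_arrival_def by blast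
  define ws where "ws = vs @ [w]"
  have vs_last: "vs ! (length vs - 1) = v"
    using last len by (subst last_conv_nth[symmetric]) auto
  have len_ws: "length ws = length vs + 1" by (simp add: ws_def)
  have ws_nth: "ws ! k = (if k < length vs then vs ! k else w)" if "k \<le> length vs" for k
    using that by (simp add: ws_def nth_append)
  show ?thesis unfolding temporal_path_arrival_def
  proof (rule exI[of _ ws], intro conjI allI impI)
    show "2 \<le> length ws" "last ws = w" using len by (simp_all add: ws_def)
    show "hd ws = u" using len hd by (cases vs) (auto simp: ws_def)
  next
    fix k assume "k + 1 < length ws"
    then consider "k + 1 < length vs" | "k = length vs - 1" "k + 1 = length vs"
      using len len_ws by linarith
    then show "{ws ! k, ws ! (k + 1)} \<in> E"
      by cases (use edges edge vs_last in \<open>simp_all add: ws_nth\<close>)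
  next
    fix k assume "k + 2 < length ws"
    then consider "k + 2 < length vs" | "k = length vs - 2" "k + 1 = length vs - 1" "k + 2 = length vs"
      using len len_ws by linarith
    then show "lab {ws ! k, ws ! (k + 1)} < lab {ws ! (k + 1), ws ! (k + 2)}"
      by cases (use incr label later arr vs_last len in \<open>simp_all add: ws_nth\<close>)
  next
    show "lab {ws ! (length ws - 2), ws ! (length ws - 1)} = t'"
    proof -
      have "length ws - 2 = length vs - 1" "length ws - 1 = length vs" "length vs - 1 < length vs"
        using len len_ws by linarith+
      then show ?thesis using vs_last label by (simp add: ws_nth)
    qed
  qed
qed

lemma temporal_path_arrival_map:
  assumes path: "temporal_path_arrival E lab u v t"
    and edges: "\<And>e. e \<in> E \<Longrightarrow> f ` e \<in> E'"
    and labels: "\<And>e. e \<in> E \<Longrightarrow> lab' (f ` e) = lab e"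
  shows "temporal_path_arrival E' lab' (f u) (f v) t"
proof -
  obtain vs where len: "length vs \<ge> 2" and hd: "hd vs = u" and last: "last vs = v"
    and path_edges: "\<forall>k. k + 1 < length vs \<longrightarrow> {vs!k, vs!(k+1)} \<in> E"
    and incr: "\<forall>k. k + 2 < length vs \<longrightarrow> lab {vs!k, vs!(k+1)} < lab {vs!(k+1), vs!(k+2)}"
    and arr: "lab {vs!(length vs - 2), vs!(length vs - 1)} = t"
    using path unfolding temporal_path_arrival_def by blast
  have mapped_label: "lab' {f (vs!k), f (vs!(k+1))} = lab {vs!k, vs!(k+1)}" if "k + 1 < length vs" for k
    using labels[OF path_edges[rule_format, OF that]] by simp
  show ?thesis unfolding temporal_path_arrival_def
  proof (rule exI[of _ "map f vs"], intro conjI allI impI)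
    show "2 \<le> length (map f vs)" using len by simp
    show "hd (map f vs) = f u" using len hd by (cases vs) auto
    show "last (map f vs) = f v" using len last by (cases vs rule: rev_cases) auto
  next
    fix k assume "k + 1 < length (map f vs)"
    then show "{map f vs ! k, map f vs ! (k + 1)} \<in> E'"
      using edges[OF path_edges[rule_format, of k]] by simp
  next
    fix k assume "k + 2 < length (map f vs)"
    then show "lab' {map f vs ! k, map f vs ! (k + 1)} < lab' {map f vs ! (k + 1), map f vs ! (k + 2)}"
      using incr mapped_label[of k] mapped_label[of "k + 1"] by simp
  next
    show "lab' {map f vs ! (length (map f vs) - 2), map f vs ! (length (map f vs) - 1)} = t"
      using len arr mapped_label[of "length vs - 2"] by (simp add: numeral_2_eq_2 Suc_diff_Suc)
  qed
qed

lemma reaches_by_map: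
  assumes "reaches_by E lab u v t"
    and "\<And>e. e \<in> E \<Longrightarrow> f ` e \<in> E'" and "\<And>e. e \<in> E \<Longrightarrow> lab' (f ` e) = lab e"
  shows "reaches_by E' lab' (f u) (f v) t"
proof -
  from assms(1) consider "u = v" | t' where "t' \<le> t" "temporal_path_arrival E lab u v t'"
    unfolding reaches_by_def by blast
  then show ?thesis
  proof cases
    case 2
    then show ?thesis
      unfolding reaches_by_def using temporal_path_arrival_map[OF 2(2) assms(2,3)] by blast
  qed (simp add: reaches_by_def)
qed

lemma reaches_by_mono: "reaches_by E lab u v t \<Longrightarrow> t \<le> t' \<Longrightarrow> reaches_by E lab u v t'"
  unfolding reaches_by_def by (meson le_trans)

lemma reaches_by_reachtime:
  assumes "finite V" and reach: "\<forall>v\<in>V. \<exists>t. reaches_by E lab u v t"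
  shows "\<forall>v\<in>V. reaches_by E lab u v (reachtime V E lab u)"
proof -
  obtain T where T: "\<And>v. v \<in> V \<Longrightarrow> reaches_by E lab u v (T v)"
    using reach by metis
  have "\<forall>v\<in>V. reaches_by E lab u v (Max (T ` V))"
  proof
    fix v assume "v \<in> V"
    show "reaches_by E lab u v (Max (T ` V))"
    proof (rule reaches_by_mono[OF T[OF \<open>v \<in> V\<close>]])
      show "T v \<le> Max (T ` V)" using \<open>finite V\<close> \<open>v \<in> V\<close> by simp
    qed
  qed
  then show ?thesis
    unfolding reachtime_def by (rule LeastI)
qed

lemma reachtime_le: "\<forall>v\<in>V. reaches_by E lab u v t \<Longrightarrow> reachtime V E lab u \<le> t"
  unfolding reachtime_def by (rule Least_le)

lemma temporal_path_arrival_potential_bound: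
  fixes d :: "'v \<Rightarrow> nat"
  assumes pos: "\<forall>e\<in>E. 1 \<le> lab e"
    and lipschitz: "\<And>x y. {x, y} \<in> E \<Longrightarrow> d y \<le> d x + 1"
    and path: "temporal_path_arrival E lab u v t"
  shows "d v \<le> d u + t"
proof -
  obtain vs where len: "length vs \<ge> 2" and hd: "hd vs = u" and last: "last vs = v"
    and edges: "\<forall>k. k + 1 < length vs \<longrightarrow> {vs!k, vs!(k+1)} \<in> E"
    and incr: "\<forall>k. k + 2 < length vs \<longrightarrow> lab {vs!k, vs!(k+1)} < lab {vs!(k+1), vs!(k+2)}"
    and arr: "lab {vs!(length vs - 2), vs!(length vs - 1)} = t"
    using path unfolding temporal_path_arrival_def by blast
  have prefix: "d (vs!(k+1)) \<le> d (vs!0) + lab {vs!k, vs!(k+1)}" if "k + 1 < length vs" for k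
    using that
  proof (induction k)
    case 0
    then show ?case using edges pos lipschitz[of "vs!0" "vs!1"] by fastforce
  next
    case (Suc k)
    then have "d (vs!(k+2)) \<le> d (vs!(k+1)) + 1" and "lab {vs!k, vs!(k+1)} < lab {vs!(k+1), vs!(k+2)}"
      using edges lipschitz incr by (simp_all add: numeral_2_eq_2)
    with Suc show ?case by (simp add: numeral_2_eq_2)
  qed
  have "vs!0 = u" using hd len by (cases vs) auto
  moreover have "vs!(length vs - 1) = v" using last len by (subst last_conv_nth[symmetric]) auto
  ultimately show ?thesis
    using prefix[of "length vs - 2"] len arr by (simp add: numeral_2_eq_2 Suc_diff_Suc)
qed

fun dist_Src :: "vtx \<Rightarrow> nat" where
  "dist_Src Src = 0" | "dist_Src Src' = 6"
| "dist_Src (A _) = 1" | "dist_Src (Z _) = 2" | "dist_Src (B _) = 2" | "dist_Src (W _) = 3"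
| "dist_Src (B' _) = 4" | "dist_Src (A' _) = 5" | "dist_Src (Z' _) = 6"
| "dist_Src (P i) = i" | "dist_Src (Q i) = i"

lemma dist_Src_edge:
  assumes "{x, y} \<in> G_edges n m c"
  shows "dist_Src y \<le> dist_Src x + 1"
proof -
  have "\<forall>x\<in>e. \<forall>y\<in>e. dist_Src y \<le> dist_Src x + 1" if "e \<in> G_edges n m c" for e
    using that unfolding G_edges_def by (elim UnE) auto
  with assms show ?thesis by blast
qed

definition ladder_edges :: "vtx set set" where
  "ladder_edges = {{Src, P 1}, {Src, Q 1}, {Src', P 5}, {Src', Q 5},
     {P 1, P 2}, {P 2, P 3}, {P 3, P 4}, {P 4, P 5}, {Q 1, Q 2}, {Q 2, Q 3}, {Q 3, Q 4}, {Q 4, Q 5},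
     {P 1, Q 1}, {P 2, Q 2}, {P 3, Q 3}, {P 4, Q 4}, {P 5, Q 5}}"

lemma G_edges_eq:
  "G_edges n m c =
     (\<Union>j<m. {{Src, A j}, {Src', A' j}, {A j, Z j}, {A' j, Z' j}})
   \<union> (\<Union>i<n. {{B i, W i}, {W i, B' i}})
   \<union> {{A j, B i} | i j. j < m \<and> i < n \<and> i \<in> c j}
   \<union> {{A' j, B' i} | i j. j < m \<and> i < n \<and> i \<in> c j}
   \<union> (\<Union>{ {{B i, B k}, {B' i, B' k}, {W i, W k}} | i k.
          i < n \<and> k < n \<and> i \<noteq> k \<and> (\<exists>j<m. i \<in> c j \<and> k \<in> c j)})
   \<union> ladder_edges"
proof -
  have intervals: "{1..4::nat} = {1, 2, 3, 4}" "{1..5::nat} = {1, 2, 3, 4, 5}" by auto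
  have "{{Src, P 1}, {Src, Q 1}, {Src', P 5}, {Src', Q 5}}
     \<union> (\<Union>i\<in>{1..4}. {{P i, P (i+1)}, {Q i, Q (i+1)}}) \<union> (\<Union>i\<in>{1..5}. {{P i, Q i}})
   = ladder_edges"
    unfolding ladder_edges_def intervals by (simp add: insert_commute eval_nat_numeral)
  then show ?thesis unfolding G_edges_def by (simp only: Un_assoc)
qed

lemma G_edges_cases:
  assumes "e \<in> G_edges n m c"
  obtains (clause) j where "j < m" "e \<in> {{Src, A j}, {Src', A' j}, {A j, Z j}, {A' j, Z' j}}"
  | (variable) i where "i < n" "e \<in> {{B i, W i}, {W i, B' i}}"
  | (occurrence) i j where "j < m" "i < n" "i \<in> c j" "e \<in> {{A j, B i}, {A' j, B' i}}"
  | (clause_mates) i k j where "j < m" "i < n" "k < n" "i \<noteq> k" "i \<in> c j" "k \<in> c j"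
      "e \<in> {{B i, B k}, {B' i, B' k}, {W i, W k}}"
  | (ladder) "e \<in> ladder_edges"
  using assms unfolding G_edges_eq
proof (elim UnE)
  assume "e \<in> (\<Union>j<m. {{Src, A j}, {Src', A' j}, {A j, Z j}, {A' j, Z' j}})"
  then show thesis using clause by blast
next
  assume "e \<in> (\<Union>i<n. {{B i, W i}, {W i, B' i}})"
  then show thesis using variable by blast
next
  assume "e \<in> {{A j, B i} | i j. j < m \<and> i < n \<and> i \<in> c j}"
  then show thesis using occurrence by blast
next
  assume "e \<in> {{A' j, B' i} | i j. j < m \<and> i < n \<and> i \<in> c j}"
  then show thesis using occurrence by blast
next
  assume "e \<in> \<Union>{ {{B i, B k}, {B' i, B' k}, {W i, W k}} | i k.
          i < n \<and> k < n \<and> i \<noteq> k \<and> (\<exists>j<m. i \<in> c j \<and> k \<in> c j)}"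
  then show thesis using clause_mates by blast
qed (rule ladder)

lemma G_edges_clause:
  assumes "j < m"
  shows "{Src, A j} \<in> G_edges n m c" "{Src', A' j} \<in> G_edges n m c"
    "{A j, Z j} \<in> G_edges n m c" "{A' j, Z' j} \<in> G_edges n m c"
  using assms by (simp_all add: G_edges_def doubleton_eq_iff)

lemma G_edges_variable:
  assumes "i < n"
  shows "{B i, W i} \<in> G_edges n m c" "{W i, B' i} \<in> G_edges n m c"
  using assms by (simp_all add: G_edges_def doubleton_eq_iff)

lemma G_edges_occurrence:
  assumes "j < m" "i < n" "i \<in> c j"
  shows "{A j, B i} \<in> G_edges n m c" "{A' j, B' i} \<in> G_edges n m c"
  using assms by (simp_all add: G_edges_def doubleton_eq_iff)

lemma G_edges_clause_mates:
  assumes "j < m" "i < n" "k < n" "i \<noteq> k" "i \<in> c j" "k \<in> c j"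
  shows "{B i, B k} \<in> G_edges n m c" "{B' i, B' k} \<in> G_edges n m c" "{W i, W k} \<in> G_edges n m c"
  using assms by (simp add: G_edges_def doubleton_eq_iff; blast)+

lemma G_edges_ladder: "ladder_edges \<subseteq> G_edges n m c"
  unfolding G_edges_eq by (rule Un_upper2)

text \<open>On ladder indices outside \<open>1..5\<close> the truncated subtraction makes \<open>mirror\<close> fail to be an
  involution, hence the restriction to \<open>G_vertices\<close> below.\<close>

fun mirror :: "vtx \<Rightarrow> vtx" where
  "mirror Src = Src'" | "mirror Src' = Src"
| "mirror (A j) = A' j" | "mirror (A' j) = A j" | "mirror (Z j) = Z' j" | "mirror (Z' j) = Z j"
| "mirror (B i) = B' i" | "mirror (B' i) = B i" | "mirror (W i) = W i"
| "mirror (P i) = Q (6 - i)" | "mirror (Q i) = P (6 - i)"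

lemma mirror_mirror: "v \<in> G_vertices n m \<Longrightarrow> mirror (mirror v) = v"
  unfolding G_vertices_def by auto

lemma mirror_vertex: "v \<in> G_vertices n m \<Longrightarrow> mirror v \<in> G_vertices n m"
  unfolding G_vertices_def by auto

lemma mirror_ladder_edge: "e \<in> ladder_edges \<Longrightarrow> mirror ` e \<in> ladder_edges"
  unfolding ladder_edges_def by (elim insertE emptyE) (simp_all add: doubleton_eq_iff)

lemma mirror_edge: "e \<in> G_edges n m c \<Longrightarrow> mirror ` e \<in> G_edges n m c"
proof (induction rule: G_edges_cases)
  case (clause j)
  then show ?case using G_edges_clause by auto
next
  case (variable i)
  then show ?case using G_edges_variable[of i n m c] by (auto simp: insert_commute)
next
  case (occurrence i j)
  then show ?case using G_edges_occurrence by auto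
next
  case (clause_mates i k j)
  then show ?case using G_edges_clause_mates by auto
next
  case ladder
  then show ?case using mirror_ladder_edge G_edges_ladder by blast
qed

section \<open>The labelling of an NAE assignment\<close>

definition nae_labelling :: "(nat \<Rightarrow> bool) \<Rightarrow> vtx set \<Rightarrow> nat" where
  "nae_labelling \<tau> e =
    (if e = {P 1, P 2} \<or> e = {Q 5, Q 4} then 2
     else if e = {P 2, P 3} \<or> e = {Q 4, Q 3} then 3
     else if e = {P 3, P 4} \<or> e = {Q 3, Q 2} \<or> e = {P 3, Q 3} then 4
     else if e = {P 4, P 5} \<or> e = {Q 2, Q 1} \<or> e = {P 2, Q 2} \<or> e = {P 4, Q 4} then 5
     else if e = {P 5, Src'} \<or> e = {Q 1, Src} \<or> e = {P 1, Q 1} \<or> e = {P 5, Q 5} then 6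
     else if \<exists>j. e = {A j, Z j} \<or> e = {A' j, Z' j} then 6
     else if (\<exists>i. \<tau> i \<and> e = {B i, W i}) \<or> (\<exists>i. \<not> \<tau> i \<and> e = {W i, B' i}) then 3
     else if (\<exists>i. \<not> \<tau> i \<and> e = {B i, W i}) \<or> (\<exists>i. \<tau> i \<and> e = {W i, B' i}) then 4
     else if (\<exists>i j. \<tau> i \<and> e = {A j, B i}) \<or> (\<exists>i j. \<not> \<tau> i \<and> e = {A' j, B' i}) then 2
     else if (\<exists>i j. \<not> \<tau> i \<and> e = {A j, B i}) \<or> (\<exists>i j. \<tau> i \<and> e = {A' j, B' i}) then 5
     else if \<exists>i k. e = {B i, B k} \<or> e = {B' i, B' k} then 5
     else if \<exists>i k. e = {W i, W k} then 4
     else 1)"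

lemma nae_labelling_pos: "1 \<le> nae_labelling \<tau> e"
  unfolding nae_labelling_def by simp

lemma nae_labelling_mirror:
  assumes "e \<in> G_edges n m c"
  shows "nae_labelling \<tau> (mirror ` e) = nae_labelling (\<lambda>i. \<not> \<tau> i) e"
  using assms
proof (induction rule: G_edges_cases)
  case ladder
  then show ?case
    unfolding ladder_edges_def by (elim insertE emptyE) (simp_all add: nae_labelling_def doubleton_eq_iff)
qed (elim insertE emptyE; simp add: nae_labelling_def doubleton_eq_iff; blast)+

lemma nae_labelling_gadgets:
  "nae_labelling \<tau> {Src, A j} = 1"
  "nae_labelling \<tau> {A j, Z j} = 6"
  "nae_labelling \<tau> {A' j, Z' j} = 6"
  "nae_labelling \<tau> {A j, B i} = (if \<tau> i then 2 else 5)"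
  "nae_labelling \<tau> {B' i, A' j} = (if \<tau> i then 5 else 2)"
  "nae_labelling \<tau> {B i, W i} = (if \<tau> i then 3 else 4)"
  "nae_labelling \<tau> {W i, B' i} = (if \<tau> i then 4 else 3)"
  "nae_labelling \<tau> {B' i, B' k} = 5"
  "nae_labelling \<tau> {W i, W k} = 4"
  by (simp add: nae_labelling_def doubleton_eq_iff; blast)+

lemma nae_labelling_ladder:
  "nae_labelling \<tau> {Src, P 1} = 1" "nae_labelling \<tau> {P 1, P 2} = 2" "nae_labelling \<tau> {P 2, P 3} = 3"
  "nae_labelling \<tau> {P 3, P 4} = 4" "nae_labelling \<tau> {P 4, P 5} = 5" "nae_labelling \<tau> {P 5, Src'} = 6"
  "nae_labelling \<tau> {P 1, Q 1} = 6" "nae_labelling \<tau> {P 2, Q 2} = 5" "nae_labelling \<tau> {P 3, Q 3} = 4"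
  "nae_labelling \<tau> {P 4, Q 4} = 5" "nae_labelling \<tau> {P 5, Q 5} = 6"
  by (simp_all add: nae_labelling_def doubleton_eq_iff)

definition nae_assignment :: "nat \<Rightarrow> (nat \<Rightarrow> nat set) \<Rightarrow> (nat \<Rightarrow> bool) \<Rightarrow> bool" where
  "nae_assignment m c \<tau> \<longleftrightarrow> (\<forall>j<m. (\<exists>i\<in>c j. \<tau> i) \<and> (\<exists>i\<in>c j. \<not> \<tau> i))"

lemma nae_assignment_negate: "nae_assignment m c \<tau> \<Longrightarrow> nae_assignment m c (\<lambda>i. \<not> \<tau> i)"
  unfolding nae_assignment_def by auto

context
  fixes n m :: nat and c :: "nat \<Rightarrow> nat set" and \<tau> :: "nat \<Rightarrow> bool"
  assumes formula: "MonLinNAE3SAT n m c"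
    and nae: "nae_assignment m c \<tau>"
begin

abbreviation arrives :: "vtx \<Rightarrow> nat \<Rightarrow> bool" where
  "arrives \<equiv> temporal_path_arrival (G_edges n m c) (nae_labelling \<tau>) Src"

lemma clause_variable_bound: "j < m \<Longrightarrow> i \<in> c j \<Longrightarrow> i < n"
  using formula unfolding MonLinNAE3SAT_def by blast

lemma variable_occurs:
  assumes "i < n"
  obtains j where "j < m" "i \<in> c j"
proof -
  have "card {j. j < m \<and> i \<in> c j} = 4"
    using formula assms unfolding MonLinNAE3SAT_def by blast
  then have "{j. j < m \<and> i \<in> c j} \<noteq> {}" by (metis card.empty zero_neq_numeral)
  with that show thesis by blast
qed

lemma clause_has_true:
  assumes "j < m"
  obtains k where "k \<in> c j" "k < n" "\<tau> k"
  using nae assms clause_variable_bound unfolding nae_assignment_def by blast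

lemma arrives_step:
  "arrives v t \<Longrightarrow> {v, w} \<in> G_edges n m c \<Longrightarrow> nae_labelling \<tau> {v, w} = t' \<Longrightarrow> t < t' \<Longrightarrow> arrives w t'"
  by (rule temporal_path_arrival_snoc)

lemma arrives_A: "j < m \<Longrightarrow> arrives (A j) 1"
  by (rule temporal_path_arrival_edge) (simp_all add: G_edges_clause nae_labelling_gadgets)

lemma arrives_true_variable:
  assumes "i < n" "\<tau> i"
  shows "arrives (B i) 2" "arrives (W i) 3" "arrives (B' i) 4"
proof -
  obtain j where j: "j < m" "i \<in> c j" using variable_occurs assms(1) .
  show B: "arrives (B i) 2"
    by (rule arrives_step[OF arrives_A[OF j(1)] G_edges_occurrence(1)[where c=c, OF j(1) assms(1) j(2)]])
      (simp_all add: nae_labelling_gadgets assms)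
  show W: "arrives (W i) 3"
    by (rule arrives_step[OF B G_edges_variable(1)[OF assms(1)]]) (simp_all add: nae_labelling_gadgets assms)
  show "arrives (B' i) 4"
    by (rule arrives_step[OF W G_edges_variable(2)[OF assms(1)]]) (simp_all add: nae_labelling_gadgets assms)
qed

lemma arrives_false_variable:
  assumes "i < n" "\<not> \<tau> i"
  shows "arrives (B i) 5" "arrives (W i) 4" "arrives (B' i) 5"
proof -
  obtain j where j: "j < m" "i \<in> c j" using variable_occurs assms(1) .
  obtain k where k: "k \<in> c j" "k < n" "\<tau> k" using clause_has_true j(1) .
  have "k \<noteq> i" using k assms by blast
  note mates = G_edges_clause_mates[where c=c, OF j(1) k(2) assms(1) \<open>k \<noteq> i\<close> k(1) j(2)]
  show "arrives (B i) 5"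
    by (rule arrives_step[OF arrives_A[OF j(1)] G_edges_occurrence(1)[where c=c, OF j(1) assms(1) j(2)]])
      (simp_all add: nae_labelling_gadgets assms)
  show "arrives (W i) 4"
    by (rule arrives_step[OF arrives_true_variable(2)[OF k(2,3)] mates(3)]) (simp_all add: nae_labelling_gadgets)
  show "arrives (B' i) 5"
    by (rule arrives_step[OF arrives_true_variable(3)[OF k(2,3)] mates(2)]) (simp_all add: nae_labelling_gadgets)
qed

lemma arrives_clause:
  assumes "j < m"
  shows "arrives (A' j) 5" "arrives (Z j) 6" "arrives (Z' j) 6"
proof -
  obtain k where k: "k \<in> c j" "k < n" "\<tau> k" using clause_has_true assms .
  have "{B' k, A' j} \<in> G_edges n m c"
    using G_edges_occurrence(2)[where c=c, OF assms k(2,1)] by (simp add: insert_commute)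
  then show A': "arrives (A' j) 5"
    by (rule arrives_step[OF arrives_true_variable(3)[OF k(2,3)]]) (simp_all add: nae_labelling_gadgets k)
  show "arrives (Z j) 6"
    by (rule arrives_step[OF arrives_A[OF assms] G_edges_clause(3)[OF assms]]) (simp_all add: nae_labelling_gadgets)
  show "arrives (Z' j) 6"
    by (rule arrives_step[OF A' G_edges_clause(4)[OF assms]]) (simp_all add: nae_labelling_gadgets)
qed

lemma arrives_ladder:
  "arrives (P 1) 1" "arrives (P 2) 2" "arrives (P 3) 3" "arrives (P 4) 4" "arrives (P 5) 5"
  "arrives Src' 6" "arrives (Q 1) 6" "arrives (Q 2) 5" "arrives (Q 3) 4" "arrives (Q 4) 5" "arrives (Q 5) 6"
proof -
  have edge: "{Src, P 1} \<in> G_edges n m c" "{P 1, P 2} \<in> G_edges n m c" "{P 2, P 3} \<in> G_edges n m c"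
    "{P 3, P 4} \<in> G_edges n m c" "{P 4, P 5} \<in> G_edges n m c" "{P 5, Src'} \<in> G_edges n m c"
    "{P 1, Q 1} \<in> G_edges n m c" "{P 2, Q 2} \<in> G_edges n m c" "{P 3, Q 3} \<in> G_edges n m c"
    "{P 4, Q 4} \<in> G_edges n m c" "{P 5, Q 5} \<in> G_edges n m c"
    using G_edges_ladder unfolding ladder_edges_def by (auto simp: insert_commute)
  show P1: "arrives (P 1) 1" by (rule temporal_path_arrival_edge[OF edge(1)]) (rule nae_labelling_ladder(1))
  show P2: "arrives (P 2) 2" by (rule arrives_step[OF P1 edge(2) nae_labelling_ladder(2)]) simp
  show P3: "arrives (P 3) 3" by (rule arrives_step[OF P2 edge(3) nae_labelling_ladder(3)]) simp
  show P4: "arrives (P 4) 4" by (rule arrives_step[OF P3 edge(4) nae_labelling_ladder(4)]) simp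
  show P5: "arrives (P 5) 5" by (rule arrives_step[OF P4 edge(5) nae_labelling_ladder(5)]) simp
  show "arrives Src' 6" by (rule arrives_step[OF P5 edge(6) nae_labelling_ladder(6)]) simp
  show "arrives (Q 1) 6" by (rule arrives_step[OF P1 edge(7) nae_labelling_ladder(7)]) simp
  show "arrives (Q 2) 5" by (rule arrives_step[OF P2 edge(8) nae_labelling_ladder(8)]) simp
  show "arrives (Q 3) 4" by (rule arrives_step[OF P3 edge(9) nae_labelling_ladder(9)]) simp
  show "arrives (Q 4) 5" by (rule arrives_step[OF P4 edge(10) nae_labelling_ladder(10)]) simp
  show "arrives (Q 5) 6" by (rule arrives_step[OF P5 edge(11) nae_labelling_ladder(11)]) simp
qed

lemma reaches_by_from_Src:
  assumes "v \<in> G_vertices n m"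
  shows "reaches_by (G_edges n m c) (nae_labelling \<tau>) Src v 6"
proof -
  have reach: "reaches_by (G_edges n m c) (nae_labelling \<tau>) Src w 6" if "arrives w t" "t \<le> 6" for w t
    using that unfolding reaches_by_def by blast
  consider "v = Src" | "v = Src'" | j where "j < m" "v \<in> {A j, A' j, Z j, Z' j}"
    | i where "i < n" "v \<in> {B i, B' i, W i}" | i where "i \<in> {1..5}" "v \<in> {P i, Q i}"
    using assms unfolding G_vertices_def by blast
  then show ?thesis
  proof cases
    case 1
    then show ?thesis unfolding reaches_by_def by simp
  next
    case 2
    then show ?thesis using reach arrives_ladder by simp
  next
    case (3 j)
    then show ?thesis
      using reach[OF arrives_A] reach[OF arrives_clause(1)] reach[OF arrives_clause(2)]
        reach[OF arrives_clause(3)] by auto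
  next
    case (4 i)
    then show ?thesis using reach arrives_true_variable arrives_false_variable
      by (cases "\<tau> i") fastforce+
  next
    case (5 i)
    then have "i = 1 \<or> i = 2 \<or> i = 3 \<or> i = 4 \<or> i = 5" by auto
    with 5 show ?thesis using reach arrives_ladder by fastforce
  qed
qed

end

lemma reaches_by_from_Src':
  assumes "MonLinNAE3SAT n m c" and "nae_assignment m c \<tau>" and "v \<in> G_vertices n m"
  shows "reaches_by (G_edges n m c) (nae_labelling \<tau>) Src' v 6"
proof -
  have "reaches_by (G_edges n m c) (nae_labelling (\<lambda>i. \<not> \<tau> i)) Src (mirror v) 6"
    using reaches_by_from_Src[OF assms(1) nae_assignment_negate[OF assms(2)] mirror_vertex[OF assms(3)]] .
  then have "reaches_by (G_edges n m c) (nae_labelling \<tau>) (mirror Src) (mirror (mirror v)) 6"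
    by (rule reaches_by_map) (simp_all add: mirror_edge nae_labelling_mirror)
  then show ?thesis using mirror_mirror[OF assms(3)] by simp
qed

lemma reachtime_Src_ge_6:
  assumes "is_solution (G_vertices n m) (G_edges n m c) G_labels S lab" and "Src \<in> S"
  shows "6 \<le> reachtime (G_vertices n m) (G_edges n m c) lab Src"
proof -
  let ?V = "G_vertices n m" and ?E = "G_edges n m c"
  have pos: "\<forall>e\<in>?E. 1 \<le> lab e"
    using assms(1) unfolding is_solution_def delayed_def G_labels_def by simp
  have "\<forall>v\<in>?V. \<exists>t. reaches_by ?E lab Src v t"
    using assms unfolding is_solution_def by simp
  then have "\<forall>v\<in>?V. reaches_by ?E lab Src v (reachtime ?V ?E lab Src)"
    by (rule reaches_by_reachtime[rotated]) (simp add: G_vertices_def)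
  moreover have "Src' \<in> ?V" unfolding G_vertices_def by simp
  ultimately have "reaches_by ?E lab Src Src' (reachtime ?V ?E lab Src)" ..
  then obtain t where "t \<le> reachtime ?V ?E lab Src" "temporal_path_arrival ?E lab Src Src' t"
    unfolding reaches_by_def by auto
  moreover have "dist_Src Src' \<le> dist_Src Src + t"
    using pos dist_Src_edge \<open>temporal_path_arrival ?E lab Src Src' t\<close>
    by (rule temporal_path_arrival_potential_bound)
  ultimately show ?thesis by simp
qed

theorem lemma1:
  fixes n m :: nat and c :: "nat \<Rightarrow> nat set"
  assumes "MonLinNAE3SAT n m c"
    and "NAE_satisfiable m c"
  shows "(\<exists>lab. is_solution (G_vertices n m) (G_edges n m c) G_labels {Src, Src'} lab \<and>
              solution_value (G_vertices n m) (G_edges n m c) lab {Src, Src'} = 6) \<and>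
         (\<forall>lab. is_solution (G_vertices n m) (G_edges n m c) G_labels {Src, Src'} lab \<longrightarrow>
              6 \<le> solution_value (G_vertices n m) (G_edges n m c) lab {Src, Src'})"
proof -
  let ?V = "G_vertices n m" and ?E = "G_edges n m c"
  have lower: "6 \<le> solution_value ?V ?E lab {Src, Src'}"
    if "is_solution ?V ?E G_labels {Src, Src'} lab" for lab
    using reachtime_Src_ge_6[OF that] unfolding solution_value_def by simp
  obtain \<tau> where \<tau>: "nae_assignment m c \<tau>"
    using assms(2) unfolding NAE_satisfiable_def nae_assignment_def by blast
  have reach: "\<forall>s\<in>{Src, Src'}. \<forall>v\<in>?V. reaches_by ?E (nae_labelling \<tau>) s v 6"
    using reaches_by_from_Src[OF assms(1) \<tau>] reaches_by_from_Src'[OF assms(1) \<tau>] by blast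
  then have solution: "is_solution ?V ?E G_labels {Src, Src'} (nae_labelling \<tau>)"
    unfolding is_solution_def delayed_def G_labels_def using nae_labelling_pos by blast
  have "solution_value ?V ?E (nae_labelling \<tau>) {Src, Src'} \<le> 6"
    using reach unfolding solution_value_def by (simp add: reachtime_le)
  then have "solution_value ?V ?E (nae_labelling \<tau>) {Src, Src'} = 6"
    using lower[OF solution] by (rule order_antisym)
  with solution lower show ?thesis by blast
qed

end
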